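(* Let $G$ be a graph of order $n$, not isomorphic to $K_n$. If $W$ is a $\tau$-set of $G$ such that $G[W]\cong K_{\tau}$ (where $\tau=\tau(G)$), then $\beta_p(G)\ge\tau(G)+1$.
   Context: All graphs are finite, simple, undirected and connected. Two vertices $u,v$ are twins if $N(u)\setminus\{v\}=N(v)\setminus\{u\}$; the twin number $\tau(G)$ is the maximum cardinality of an equivalence class of the twin relation; a $\tau$-set is a set of pairwise twin vertices of cardinality $\tau(G)$. For a partition $\Pi=\{S_1,\dots,S_k\}$ of $V(G)$, $r(u|\Pi)=(d(u,S_1),\dots,d(u,S_k))$ with $d(u,S)=\min_{w\in S}d(u,w)$; $\Pi$ is locating if $r(u|\Pi)\ne r(v|\Pi)$ for all distinct $u,v$; $\beta_p(G)$ is the minimum size of a locating partition. *)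

theory Defs
  imports Main "HOL-Library.Disjoint_Sets"
begin

definition graph :: "'a set \<Rightarrow> ('a \<Rightarrow> 'a \<Rightarrow> bool) \<Rightarrow> bool" where
  "graph V E \<longleftrightarrow> finite V \<and> V \<noteq> {} \<and>
     (\<forall>u v. E u v \<longrightarrow> u \<in> V \<and> v \<in> V) \<and>
     (\<forall>u v. E u v \<longrightarrow> E v u) \<and> (\<forall>u. \<not> E u u)"

definition connected_graph :: "'a set \<Rightarrow> ('a \<Rightarrow> 'a \<Rightarrow> bool) \<Rightarrow> bool" where
  "connected_graph V E \<longleftrightarrow> graph V E \<and> (\<forall>u\<in>V. \<forall>v\<in>V. \<exists>n. (E ^^ n) u v)"

definition gdist :: "('a \<Rightarrow> 'a \<Rightarrow> bool) \<Rightarrow> 'a \<Rightarrow> 'a \<Rightarrow> nat" where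
  "gdist E u v = (LEAST n. (E ^^ n) u v)"

definition set_dist :: "('a \<Rightarrow> 'a \<Rightarrow> bool) \<Rightarrow> 'a \<Rightarrow> 'a set \<Rightarrow> nat" where
  "set_dist E u S = Min ((gdist E u) ` S)"

definition nbhd :: "'a set \<Rightarrow> ('a \<Rightarrow> 'a \<Rightarrow> bool) \<Rightarrow> 'a \<Rightarrow> 'a set" where
  "nbhd V E u = {w \<in> V. E u w}"

definition twins :: "'a set \<Rightarrow> ('a \<Rightarrow> 'a \<Rightarrow> bool) \<Rightarrow> 'a \<Rightarrow> 'a \<Rightarrow> bool" where
  "twins V E u v \<longleftrightarrow> u \<in> V \<and> v \<in> V \<and> nbhd V E u - {v} = nbhd V E v - {u}"

definition twin_number :: "'a set \<Rightarrow> ('a \<Rightarrow> 'a \<Rightarrow> bool) \<Rightarrow> nat" where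
  "twin_number V E = Max ((\<lambda>u. card {v \<in> V. twins V E u v}) ` V)"

definition tau_set :: "'a set \<Rightarrow> ('a \<Rightarrow> 'a \<Rightarrow> bool) \<Rightarrow> 'a set \<Rightarrow> bool" where
  "tau_set V E W \<longleftrightarrow> W \<subseteq> V \<and> (\<forall>u\<in>W. \<forall>v\<in>W. twins V E u v) \<and>
     card W = twin_number V E"

definition locating_partition :: "'a set \<Rightarrow> ('a \<Rightarrow> 'a \<Rightarrow> bool) \<Rightarrow> 'a set set \<Rightarrow> bool" where
  "locating_partition V E P \<longleftrightarrow> partition_on V P \<and>
     (\<forall>u\<in>V. \<forall>v\<in>V. u \<noteq> v \<longrightarrow> (\<exists>S\<in>P. set_dist E u S \<noteq> set_dist E v S))"

definition partition_dimension :: "'a set \<Rightarrow> ('a \<Rightarrow> 'a \<Rightarrow> bool) \<Rightarrow> nat" where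
  "partition_dimension V E = (LEAST k. \<exists>P. locating_partition V E P \<and> card P = k)"

end

theory Submission
  imports Defs
begin

text \<open>Let \<open>P\<close> be a locating partition. Two twins are at the same distance from every vertex
  other than themselves, so twins are separated only by the classes containing them; hence the
  vertices of the \<open>\<tau>\<close>-set \<open>W\<close> lie in pairwise distinct classes and \<open>|P| \<ge> \<tau>\<close>. If \<open>|P| = \<tau>\<close>, every
  class contains exactly one vertex of \<open>W\<close>. As \<open>W\<close> is a clique but \<open>G\<close> is not complete, some
  \<open>x \<notin> W\<close> is adjacent to a vertex of \<open>W\<close>, hence to all of \<open>W\<close>. If \<open>w\<close> is the vertex of \<open>W\<close> in the
  class of \<open>x\<close>, then \<open>x\<close> and \<open>w\<close> are at distance 1 from every other class, a contradiction.\<close>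

lemma gdist_self [simp]: "gdist E u u = 0"
  unfolding gdist_def by (rule Least_eq_0) simp

lemma gdist_le: "(E ^^ n) u v \<Longrightarrow> gdist E u v \<le> n"
  unfolding gdist_def by (rule Least_le)

lemma relpowp_gdist:
  "connected_graph V E \<Longrightarrow> u \<in> V \<Longrightarrow> v \<in> V \<Longrightarrow> (E ^^ gdist E u v) u v"
  unfolding gdist_def connected_graph_def by (meson LeastI_ex)

lemma gdist_eq_0_iff:
  assumes "connected_graph V E" "u \<in> V" "v \<in> V"
  shows "gdist E u v = 0 \<longleftrightarrow> u = v"
  using relpowp_gdist[OF assms] by auto

lemma set_dist_eq_0: "finite T \<Longrightarrow> u \<in> T \<Longrightarrow> set_dist E u T = 0"
  unfolding set_dist_def by (metis Min_le finite_imageI gdist_self image_eqI le_zero_eq)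

lemma set_dist_eq_1:
  assumes cg: "connected_graph V E" and "u \<in> V" "T \<subseteq> V" "finite T" "u \<notin> T"
    and "t \<in> T" "E u t"
  shows "set_dist E u T = 1"
proof -
  have "gdist E u t \<le> 1"
    using gdist_le[where n=1] \<open>E u t\<close> by (metis One_nat_def relpowp_1)
  then have "Min (gdist E u ` T) \<le> 1"
    using assms by (meson Min_le finite_imageI image_eqI order_trans)
  moreover have "\<forall>t'\<in>T. gdist E u t' \<noteq> 0"
    using gdist_eq_0_iff[OF cg] assms by blast
  then have "Min (gdist E u ` T) \<ge> 1"
    using assms by (subst Min_ge_iff) auto
  ultimately show ?thesis
    unfolding set_dist_def by simp
qed

lemma twins_sym: "twins V E u v \<Longrightarrow> twins V E v u"
  unfolding twins_def by auto

lemma twins_adjacent: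
  assumes "graph V E" "twins V E w w'" "E w x" "x \<noteq> w'"
  shows "E w' x"
proof (cases "w = w'")
  case False
  have "x \<in> nbhd V E w - {w'}"
    using assms unfolding nbhd_def graph_def by auto
  then show ?thesis
    using \<open>twins V E w w'\<close> unfolding twins_def nbhd_def by auto
qed (use assms in simp)

lemma twins_gdist_le:
  assumes cg: "connected_graph V E" and tw: "twins V E w w'"
    and v: "v \<in> V" "v \<noteq> w" "v \<noteq> w'"
  shows "gdist E w' v \<le> gdist E w v"
proof -
  have g: "graph V E" and w: "w \<in> V"
    using cg tw unfolding connected_graph_def twins_def by auto
  have "gdist E w v \<noteq> 0"
    using gdist_eq_0_iff[OF cg w v(1)] v by simp
  then obtain m where m: "gdist E w v = Suc m"
    using not0_implies_Suc by blast
  then obtain y where y: "E w y" "(E ^^ m) y v"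
    using relpowp_gdist[OF cg w v(1)] by (metis relpowp_Suc_D2)
  show ?thesis
  proof (cases "y = w'")
    case True
    then show ?thesis using gdist_le[OF y(2)] m by simp
  next
    case False
    \<comment> \<open>the first step of a shortest walk from \<open>w\<close> can be taken from its twin \<open>w'\<close> instead\<close>
    then have "(E ^^ Suc m) w' v"
      using twins_adjacent[OF g tw y(1)] y(2) by (metis relpowp_Suc_I2)
    then show ?thesis using gdist_le m by metis
  qed
qed

lemma twins_set_dist_eq:
  assumes "connected_graph V E" "twins V E w w'" "T \<subseteq> V" "w \<notin> T" "w' \<notin> T"
  shows "set_dist E w T = set_dist E w' T"
proof -
  have "gdist E w t = gdist E w' t" if "t \<in> T" for t
  proof -
    have "t \<in> V" "t \<noteq> w" "t \<noteq> w'"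
      using assms(3-5) that by auto
    then show ?thesis
      using twins_gdist_le[OF assms(1,2)] twins_gdist_le[OF assms(1) twins_sym[OF assms(2)]]
      by (metis antisym)
  qed
  then show ?thesis
    unfolding set_dist_def by (metis image_cong)
qed

lemma relpowp_crossing_edge:
  "(E ^^ n) a b \<Longrightarrow> a \<in> W \<Longrightarrow> b \<notin> W \<Longrightarrow> \<exists>x y. x \<in> W \<and> y \<notin> W \<and> E x y"
proof (induction n arbitrary: b)
  case (Suc n)
  then obtain c where "(E ^^ n) a c" "E c b"
    by (metis relpowp_Suc_E)
  then show ?case
    using Suc by (cases "c \<in> W") auto
qed simp

lemma twin_number_pos: "graph V E \<Longrightarrow> twin_number V E > 0"
proof -
  assume g: "graph V E"
  then obtain u where u: "u \<in> V" and fin: "finite V"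
    unfolding graph_def by auto
  then have "card {v \<in> V. twins V E u v} > 0"
    unfolding twins_def by (subst card_gt_0_iff) auto
  also have "\<dots> \<le> twin_number V E"
    unfolding twin_number_def using u fin by (intro Max_ge) auto
  finally show ?thesis .
qed

lemma partition_on_part_unique:
  "partition_on V P \<Longrightarrow> S \<in> P \<Longrightarrow> T \<in> P \<Longrightarrow> u \<in> S \<Longrightarrow> u \<in> T \<Longrightarrow> S = T"
  using partition_onD2 disjointD by blast

lemma locating_partition_same_part_eq:
  assumes lp: "locating_partition V E P" and fin: "finite V"
    and "S \<in> P" "u \<in> S" "v \<in> S"
    and others: "\<And>T. T \<in> P \<Longrightarrow> T \<noteq> S \<Longrightarrow> set_dist E u T = set_dist E v T"
  shows "u = v"
proof -
  have po: "partition_on V P"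
    using lp unfolding locating_partition_def by auto
  have "S \<subseteq> V"
    using partition_onD1[OF po] \<open>S \<in> P\<close> by blast
  then have "finite S"
    using fin finite_subset by blast
  then have "set_dist E u T = set_dist E v T" if "T \<in> P" for T
    using others[OF that] set_dist_eq_0[of S] assms(4,5) by (cases "T = S") auto
  moreover have "u \<in> V" "v \<in> V"
    using \<open>S \<subseteq> V\<close> assms(4,5) by auto
  ultimately show ?thesis
    using lp unfolding locating_partition_def by blast
qed

lemma locating_partition_separates_twins:
  assumes cg: "connected_graph V E" and lp: "locating_partition V E P"
    and W: "W \<subseteq> V" "\<forall>u\<in>W. \<forall>v\<in>W. twins V E u v"
  obtains f where "inj_on f W" "f ` W \<subseteq> P" "\<And>w. w \<in> W \<Longrightarrow> w \<in> f w"
proof -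
  have po: "partition_on V P" and fin: "finite V"
    using lp cg unfolding locating_partition_def connected_graph_def graph_def by auto
  define f where "f w = (SOME S. S \<in> P \<and> w \<in> S)" for w
  have f: "f w \<in> P" "w \<in> f w" if "w \<in> W" for w
    using someI_ex[of "\<lambda>S. S \<in> P \<and> w \<in> S"] partition_onD1[OF po] W that
    unfolding f_def by blast+
  have "inj_on f W"
  proof (rule inj_onI)
    fix w w' assume w: "w \<in> W" "w' \<in> W" "f w = f w'"
    have "set_dist E w T = set_dist E w' T" if "T \<in> P" "T \<noteq> f w" for T
    proof (rule twins_set_dist_eq[OF cg])
      show "twins V E w w'" "T \<subseteq> V"
        using W w partition_onD1[OF po] that by auto
      show "w \<notin> T" "w' \<notin> T"
        using partition_on_part_unique[OF po] f w that by metis+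
    qed
    then show "w = w'"
      using locating_partition_same_part_eq[OF lp fin] f w by metis
  qed
  then show thesis
    using that f by blast
qed

lemma clique_outside_neighbour:
  assumes cg: "connected_graph V E" and not_complete: "\<exists>u\<in>V. \<exists>v\<in>V. u \<noteq> v \<and> \<not> E u v"
    and W: "W \<subseteq> V" "W \<noteq> {}" and clique: "\<forall>u\<in>W. \<forall>v\<in>W. u \<noteq> v \<longrightarrow> E u v"
  obtains w x where "w \<in> W" "x \<in> V - W" "E w x"
proof -
  obtain a b where "a \<in> V" "b \<in> V" "a \<noteq> b" "\<not> E a b"
    using not_complete by blast
  then obtain c where c: "c \<in> V" "c \<notin> W"
    using clique by blast
  obtain w0 where w0: "w0 \<in> W"
    using W by blast
  then have "w0 \<in> V"
    using W by blast
  then obtain w x where "w \<in> W" "x \<notin> W" "E w x"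
    using relpowp_crossing_edge[OF relpowp_gdist[OF cg _ c(1)] w0 c(2)] by blast
  moreover have "x \<in> V"
    using cg \<open>E w x\<close> unfolding connected_graph_def graph_def by blast
  ultimately show thesis
    using that by blast
qed

lemma clique_twin_set_card_less_locating_partition:
  assumes cg: "connected_graph V E" and not_complete: "\<exists>u\<in>V. \<exists>v\<in>V. u \<noteq> v \<and> \<not> E u v"
    and W: "W \<subseteq> V" "W \<noteq> {}" and twins: "\<forall>u\<in>W. \<forall>v\<in>W. twins V E u v"
    and clique: "\<forall>u\<in>W. \<forall>v\<in>W. u \<noteq> v \<longrightarrow> E u v"
    and lp: "locating_partition V E P"
  shows "card W < card P"
proof -
  have g: "graph V E" and fin: "finite V" and po: "partition_on V P"
    using cg lp unfolding connected_graph_def graph_def locating_partition_def by auto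
  have finP: "finite P"
    using finite_elements[OF fin po] .
  obtain f where inj: "inj_on f W" and fW: "f ` W \<subseteq> P" and mem: "\<And>w. w \<in> W \<Longrightarrow> w \<in> f w"
    using locating_partition_separates_twins[OF cg lp W(1) twins] by blast
  have "card W \<le> card P"
    using card_inj_on_le[OF inj fW finP] .
  moreover have "card W \<noteq> card P"
  proof
    assume "card W = card P"
    then have onto: "f ` W = P"
      using card_subset_eq[OF finP fW] card_image[OF inj] by simp
    obtain w x where wx: "w \<in> W" "x \<in> V - W" "E w x"
      using clique_outside_neighbour[OF cg not_complete W clique] .
    have adj: "E x v" if "v \<in> W" for v
    proof -
      have "E v x"
        using twins_adjacent[OF g _ \<open>E w x\<close>] twins wx that by blast
      then show ?thesis
        using g unfolding graph_def by blast
    qed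
    obtain w' where w': "w' \<in> W" "x \<in> f w'"
      using partition_onD1[OF po] onto wx by blast
    have fw': "f w' \<in> P"
      using fW w'(1) by blast
    \<comment> \<open>every class other than that of \<open>x\<close> and \<open>w'\<close> contains a common neighbour of both\<close>
    have "set_dist E x T = set_dist E w' T" if T: "T \<in> P" "T \<noteq> f w'" for T
    proof -
      obtain v where v: "v \<in> W" "T = f v"
        using T(1) onto by blast
      have "T \<subseteq> V"
        using T(1) partition_onD1[OF po] by blast
      moreover have "finite T"
        using \<open>T \<subseteq> V\<close> fin finite_subset by blast
      moreover have "x \<notin> T" "w' \<notin> T"
        using partition_on_part_unique[OF po fw' T(1)] T(2) w'(2) mem[OF w'(1)] by blast+
      moreover have "v \<in> T"
        using mem[OF v(1)] v(2) by simp
      moreover have "E w' v"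
      proof -
        have "w' \<noteq> v"
          using \<open>v \<in> T\<close> \<open>w' \<notin> T\<close> by blast
        then show ?thesis
          using clique w'(1) v(1) by blast
      qed
      moreover have "x \<in> V" "w' \<in> V"
        using wx w'(1) W(1) by auto
      ultimately show ?thesis
        using set_dist_eq_1[OF cg] adj[OF v(1)] by metis
    qed
    then have "x = w'"
      using locating_partition_same_part_eq[OF lp fin fw' w'(2) mem[OF w'(1)]] by blast
    then show False
      using wx w' by simp
  qed
  ultimately show ?thesis
    by simp
qed

lemma locating_partition_singletons:
  assumes cg: "connected_graph V E"
  shows "locating_partition V E ((\<lambda>v. {v}) ` V)"
  unfolding locating_partition_def
proof (rule conjI[OF partition_on_singletons], intro ballI impI)
  fix u v assume uv: "u \<in> V" "v \<in> V" "u \<noteq> v"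
  have "gdist E v u \<noteq> 0"
    using gdist_eq_0_iff[OF cg uv(2,1)] uv(3) by simp
  then have "set_dist E u {u} \<noteq> set_dist E v {u}"
    unfolding set_dist_def by simp
  moreover have "{u} \<in> (\<lambda>v. {v}) ` V"
    using uv(1) by blast
  ultimately show "\<exists>S\<in>(\<lambda>v. {v}) ` V. set_dist E u S \<noteq> set_dist E v S"
    by blast
qed

lemma partition_dimension_attained:
  assumes "connected_graph V E"
  shows "\<exists>P. locating_partition V E P \<and> card P = partition_dimension V E"
proof -
  have "\<exists>k P. locating_partition V E P \<and> card P = k"
    using locating_partition_singletons[OF assms] by blast
  then show ?thesis
    unfolding partition_dimension_def by (rule LeastI_ex)
qed

theorem proposition15:
  fixes V :: "'a set" and E :: "'a \<Rightarrow> 'a \<Rightarrow> bool" and W :: "'a set"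
  assumes "connected_graph V E"
    and "\<exists>u\<in>V. \<exists>v\<in>V. u \<noteq> v \<and> \<not> E u v"
    and "tau_set V E W"
    and "\<forall>u\<in>W. \<forall>v\<in>W. u \<noteq> v \<longrightarrow> E u v"
  shows "partition_dimension V E \<ge> twin_number V E + 1"
proof -
  have W: "W \<subseteq> V" "\<forall>u\<in>W. \<forall>v\<in>W. twins V E u v" and card_W: "card W = twin_number V E"
    using assms(3) unfolding tau_set_def by auto
  have "twin_number V E > 0"
    using twin_number_pos assms(1) unfolding connected_graph_def by blast
  then have "W \<noteq> {}"
    using card_W by auto
  obtain P where "locating_partition V E P" "card P = partition_dimension V E"
    using partition_dimension_attained[OF assms(1)] by blast
  moreover have "card W < card P" if "locating_partition V E P" for P
    using clique_twin_set_card_less_locating_partition[OF assms(1,2) W(1) \<open>W \<noteq> {}\<close> W(2) assms(4) that] .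
  ultimately show ?thesis
    using card_W by fastforce
qed

end
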